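(* Let $\mathbf d=(d_1,\ldots,d_n)$ be a degree sequence, $w\in[n]$, and let $V_w\subseteq[n]$ and $\mathbf d_{n,w}=(d_v)_{v\in V_w}$ be as described in the context. Let $\mathcal G_w$ be a random functional graph on vertex set $V_w$ with degree sequence $\mathbf d_{n,w}$, i.e. the graph of a uniformly random $f:V_w\to V_w$ with $|f^{-1}(\{v\})|=d_v$ for all $v\in V_w$. Then an $n$-extension of $\mathcal G_w$ is a random functional graph with degree sequence $\mathbf d$, i.e. it is distributed as the graph of a uniformly random element of $\mathfrak F(\mathbf d)$.
   Context: A degree sequence is $\mathbf d=(d_1,\ldots,d_n)\in\mathbb N_0^n$ with $\sum_j d_j=n$; $\mathfrak F(\mathbf d)=\{f:[n]\to[n]: |f^{-1}(\{i\})|=d_i\ \forall i\}$; the functional graph of $f:V\to V$ has vertex set $V$ and edges $(v,f(v))$. Let $\sigma^2=\frac1n\sum_j d_j^2-1$ and $\hat n=\lfloor (n\sigma^2)^{4/3}\rfloor$. If $\hat n\ge n$, $V_w=[n]$. Otherwise let $v_1,\ldots,v_{n-\hat n}$ be $n-\hat n$ distinct vertices in $[n]\setminus\{w\}$ with $d_{v_i}=1$, chosen by a fixed deterministic rule (such vertices exist), and $V_w=[n]\setminus\{v_1,\ldots,v_{n-\hat n}\}$. ($\sum_{v\in V_w}d_v=|V_w|$.) Given $V'\subseteq[n]$ and a functional graph $G=(V',E')$ on $V'$, an $n$-extension of $G$ is the random graph on $[n]$ produced as follows: start with $V_0=V'$, $E_0=E'$; while $V_i\ne[n]$, let $u$ be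 the smallest element of $[n]\setminus V_i$; with probability $1/(|E_i|+1)$ set $V_{i+1}=V_i\cup\{u\}$, $E_{i+1}=E_i\cup\{(u,u)\}$ (a loop); otherwise choose an edge $(x,y)\in E_i$ uniformly at random and set $V_{i+1}=V_i\cup\{u\}$, $E_{i+1}=(E_i\setminus\{(x,y)\})\cup\{(x,u),(u,y)\}$; all random choices independent. The output is $(V_i,E_i)$ once $V_i=[n]$. *)

theory Defs
  imports "HOL-Probability.Probability"
begin

text \<open>Vertices are natural numbers; [n] = {1..n}. A graph is a pair (vertex set, edge set),
  edges being ordered pairs (v, f v).\<close>

definition degF :: "nat set \<Rightarrow> (nat \<Rightarrow> nat) \<Rightarrow> (nat \<Rightarrow> nat) set" where
  "degF V d = {f. f \<in> V \<rightarrow>\<^sub>E V \<and> (\<forall>i\<in>V. card {v\<in>V. f v = i} = d i)}"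

definition fgraph :: "nat set \<Rightarrow> (nat \<Rightarrow> nat) \<Rightarrow> (nat \<times> nat) set" where
  "fgraph V f = {(v, f v) | v. v \<in> V}"

definition random_fg :: "nat set \<Rightarrow> (nat \<Rightarrow> nat) \<Rightarrow> (nat set \<times> (nat \<times> nat) set) pmf" where
  "random_fg V d = map_pmf (\<lambda>f. (V, fgraph V f)) (pmf_of_set (degF V d))"

definition ext_step :: "nat \<Rightarrow> nat set \<times> (nat \<times> nat) set \<Rightarrow> (nat set \<times> (nat \<times> nat) set) pmf" where
  "ext_step n s = (case s of (V, E) \<Rightarrow>
     if V = {1..n} then return_pmf (V, E)
     else (let u = Min ({1..n} - V) in
       bind_pmf (bernoulli_pmf (1 / real (card E + 1)))
         (\<lambda>b. if b then return_pmf (insert u V, insert (u, u) E)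
              else map_pmf (\<lambda>(x, y). (insert u V, (E - {(x, y)}) \<union> {(x, u), (u, y)}))
                     (pmf_of_set E))))"

text \<open>n-extension of the graph (V, E): iterate the step (at most n vertices are added,
  so n iterations reach vertex set [n]).\<close>
definition n_extension :: "nat \<Rightarrow> nat set \<times> (nat \<times> nat) set \<Rightarrow> (nat set \<times> (nat \<times> nat) set) pmf" where
  "n_extension n G = ((\<lambda>p. bind_pmf p (ext_step n)) ^^ n) (return_pmf G)"

definition sigma2 :: "nat \<Rightarrow> (nat \<Rightarrow> nat) \<Rightarrow> real" where
  "sigma2 n d = (1 / real n) * (\<Sum>j\<in>{1..n}. real (d j) ^ 2) - 1"

definition hat_n :: "nat \<Rightarrow> (nat \<Rightarrow> nat) \<Rightarrow> nat" where
  "hat_n n d = nat \<lfloor>(real n * sigma2 n d) powr (4 / 3)\<rfloor>"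

end

theory Submission
  imports Defs
begin

text \<open>Inserting a new vertex \<open>u\<close> as a loop with probability \<open>1/(|V|+1)\<close>, and otherwise into a
  uniformly chosen edge, is the same as inserting it at a uniformly chosen position
  \<open>z \<in> V \<union> {u}\<close>. When \<open>d u = 1\<close> the insertion map \<open>(g, z) \<mapsto> g'\<close> is a bijection from
  \<open>degF V d \<times> (V \<union> {u})\<close> onto \<open>degF (V \<union> {u}) d\<close>, since \<open>z\<close> is recovered as the unique
  preimage of \<open>u\<close> under \<open>g'\<close>. So each extension step carries the uniform distribution to the
  uniform one, and the vertices outside \<open>V\<^sub>w\<close> all have degree 1.\<close>

lemma bernoulli_pmf_1: "bernoulli_pmf 1 = return_pmf True"
  by (rule pmf_eqI) (auto simp: indicator_def)

lemma pmf_of_set_insert_eq_bernoulli_bind: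
  assumes "finite A" "a \<notin> A"
  shows "pmf_of_set (insert a A) =
    bind_pmf (bernoulli_pmf (1 / real (card A + 1))) (\<lambda>b. if b then return_pmf a else pmf_of_set A)"
proof (cases "A = {}")
  case True
  then show ?thesis by (simp add: bernoulli_pmf_1 bind_return_pmf pmf_of_set_singleton)
next
  case False
  show ?thesis
  proof (rule pmf_eqI)
    fix x
    show "pmf (pmf_of_set (insert a A)) x =
          pmf (bind_pmf (bernoulli_pmf (1 / real (card A + 1))) (\<lambda>b. if b then return_pmf a else pmf_of_set A)) x"
      using assms False by (cases "x = a"; cases "x \<in> A") (auto simp: pmf_bind indicator_def field_simps)
  qed
qed

lemma pmf_of_set_Times:
  assumes "finite A" "A \<noteq> {}" "finite B" "B \<noteq> {}"
  shows "pmf_of_set (A \<times> B) = pair_pmf (pmf_of_set A) (pmf_of_set B)"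
proof (rule pmf_eqI)
  fix x :: "'a \<times> 'b"
  show "pmf (pmf_of_set (A \<times> B)) x = pmf (pair_pmf (pmf_of_set A) (pmf_of_set B)) x"
    using assms by (cases x) (simp add: pmf_pair card_cartesian_product indicator_def)
qed

lemma bind_pmf_map_pmf_eq_map_pmf_pair:
  "bind_pmf A (\<lambda>x. map_pmf (f x) B) = map_pmf (\<lambda>(x, y). f x y) (pair_pmf A B)"
  by (simp add: pair_pmf_def map_bind_pmf map_pmf_def bind_assoc_pmf bind_return_pmf)

lemma funpow_bind_pmf_return:
  fixes K :: "'a \<Rightarrow> 'a pmf"
  shows "bind_pmf p (\<lambda>x. ((\<lambda>q. bind_pmf q K) ^^ k) (return_pmf x)) = ((\<lambda>q. bind_pmf q K) ^^ k) p"
  by (induction k) (simp_all add: bind_return_pmf' flip: bind_assoc_pmf)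

lemma bij_betw_transpose_insert_Diff:
  assumes "u \<notin> V" "z \<in> insert u V"
  shows "bij_betw (Transposition.transpose z u) (insert u V - {z}) V"
    and "bij_betw (Transposition.transpose z u) V (insert u V - {z})"
  using assms by (auto simp: bij_betw_def Transposition.transpose_def image_def)

lemma card_filter_comp_bij_betw:
  assumes "bij_betw h A B"
  shows "card {a\<in>A. g (h a) = i} = card {b\<in>B. g b = i}"
proof -
  have "h ` {a\<in>A. g (h a) = i} = {b\<in>B. g b = i}"
    using assms by (auto simp: bij_betw_def)
  moreover have "inj_on h {a\<in>A. g (h a) = i}"
    using assms by (auto simp: bij_betw_def intro: inj_on_subset)
  ultimately show ?thesis by (metis card_image)
qed

lemma mem_degF_iff:
  "f \<in> degF V d \<longleftrightarrow>
     (\<forall>v\<in>V. f v \<in> V) \<and> (\<forall>v. v \<notin> V \<longrightarrow> f v = undefined) \<and> (\<forall>i\<in>V. card {v\<in>V. f v = i} = d i)"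
  unfolding degF_def by (auto simp: PiE_def extensional_def Pi_def)

lemma finite_degF: "finite V \<Longrightarrow> finite (degF V d)"
  by (rule finite_subset[of _ "V \<rightarrow>\<^sub>E V"]) (auto simp: degF_def finite_PiE)

lemma degF_nonempty:
  assumes "finite V" "(\<Sum>i\<in>V. d i) = card V"
  shows "degF V d \<noteq> {}"
proof -
  let ?S = "SIGMA i:V. {..<d i}"
  have "card ?S = card V" "finite ?S"
    using assms by (simp_all add: card_SigmaI)
  then obtain h where h: "bij_betw h V ?S"
    using assms(1) finite_same_card_bij by metis
  have h_fst_in: "fst (h v) \<in> V" if "v \<in> V" for v
    using bij_betw_apply[OF h that] by (cases "h v") auto
  define f where "f v = (if v \<in> V then fst (h v) else undefined)" for v
  have "f \<in> degF V d"
    unfolding mem_degF_iff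
  proof (intro conjI ballI allI impI)
    fix i assume i: "i \<in> V"
    have "h ` {v\<in>V. f v = i} = {i} \<times> {..<d i}"
    proof (intro equalityI subsetI)
      fix p assume "p \<in> h ` {v\<in>V. f v = i}"
      then obtain v where "v \<in> V" "fst (h v) = i" "p = h v" by (auto simp: f_def)
      then show "p \<in> {i} \<times> {..<d i}" using bij_betw_apply[OF h, of v] by (auto simp: mem_Times_iff)
    next
      fix p assume p: "p \<in> {i} \<times> {..<d i}"
      then have "p \<in> h ` V" using h i by (auto simp: bij_betw_def)
      then obtain v where "v \<in> V" "p = h v" by blast
      with p show "p \<in> h ` {v\<in>V. f v = i}" by (auto simp: f_def)
    qed
    moreover have "inj_on h {v\<in>V. f v = i}"
      using h by (auto simp: bij_betw_def intro: inj_on_subset)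
    ultimately show "card {v\<in>V. f v = i} = d i"
      by (metis card_image card_cartesian_product_singleton card_lessThan)
  qed (use h_fst_in in \<open>auto simp: f_def\<close>)
  then show ?thesis by blast
qed

text \<open>For \<open>z \<noteq> u\<close> the edge \<open>z \<rightarrow> g z\<close> is subdivided by the new vertex \<open>u\<close> (through the
  transposition, \<open>u\<close> takes over the out-edge of \<open>z\<close>); for \<open>z = u\<close> the loop \<open>u \<rightarrow> u\<close> is added.
  These are the two moves of \<open>ext_step\<close>.\<close>

definition insert_vertex :: "nat \<Rightarrow> (nat \<Rightarrow> nat) \<Rightarrow> nat \<Rightarrow> nat \<Rightarrow> nat" where
  "insert_vertex u g z v = (if v = z then u else g (Transposition.transpose z u v))"

lemma insert_vertex_transpose:
  "w \<noteq> u \<Longrightarrow> insert_vertex u g z (Transposition.transpose z u w) = g w"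
  by (auto simp: insert_vertex_def Transposition.transpose_def)

lemma insert_vertex_eq_new_iff:
  assumes "u \<notin> V" "g \<in> degF V d" "z \<in> insert u V" "v \<in> insert u V"
  shows "insert_vertex u g z v = u \<longleftrightarrow> v = z"
proof -
  have "g (Transposition.transpose z u v) \<in> V" if "v \<noteq> z"
    using assms that bij_betw_apply[OF bij_betw_transpose_insert_Diff(1)[OF assms(1,3)]]
    by (auto simp: mem_degF_iff)
  then show ?thesis using assms(1) by (auto simp: insert_vertex_def)
qed

lemma insert_vertex_in_degF:
  assumes "u \<notin> V" "g \<in> degF V d" "z \<in> insert u V" "d u = 1"
  shows "insert_vertex u g z \<in> degF (insert u V) d"
  unfolding mem_degF_iff
proof (intro conjI ballI allI impI)
  let ?f = "insert_vertex u g z" and ?\<tau> = "Transposition.transpose z u"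
  have \<tau>: "bij_betw ?\<tau> (insert u V - {z}) V"
    using bij_betw_transpose_insert_Diff(1)[OF assms(1,3)] .
  note g = assms(2)[unfolded mem_degF_iff]
  show "?f v \<in> insert u V" if "v \<in> insert u V" for v
    using that g bij_betw_apply[OF \<tau>, of v] by (auto simp: insert_vertex_def)
  show "?f v = undefined" if "v \<notin> insert u V" for v
    using that g assms(3) by (auto simp: insert_vertex_def)
  fix i assume "i \<in> insert u V"
  then consider "i = u" | "i \<in> V" "i \<noteq> u" using assms(1) by blast
  then show "card {v\<in>insert u V. ?f v = i} = d i"
  proof cases
    case 1
    then have "{v\<in>insert u V. ?f v = i} = {z}"
      using insert_vertex_eq_new_iff[OF assms(1-3)] assms(3) by blast
    then show ?thesis using 1 assms(4) by simp
  next
    case 2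
    then have "{v\<in>insert u V. ?f v = i} = {v\<in>insert u V - {z}. g (?\<tau> v) = i}"
      by (auto simp: insert_vertex_def)
    also have "card \<dots> = card {v\<in>V. g v = i}"
      by (rule card_filter_comp_bij_betw[OF \<tau>])
    finally show ?thesis using g 2 by simp
  qed
qed

lemma insert_vertex_inj:
  assumes "u \<notin> V"
  shows "inj_on (\<lambda>(g, z). insert_vertex u g z) (degF V d \<times> insert u V)"
proof (rule inj_onI, clarify)
  fix g z g' z'
  assume g: "g \<in> degF V d" "z \<in> insert u V" and g': "g' \<in> degF V d" "z' \<in> insert u V"
    and eq: "insert_vertex u g z = insert_vertex u g' z'"
  have "insert_vertex u g' z' z = u"
    using eq insert_vertex_eq_new_iff[OF assms g, of z] g(2) by simp
  then have "z = z'"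
    using insert_vertex_eq_new_iff[OF assms g', of z] g(2) by simp
  have "g w = g' w" for w
  proof (cases "w \<in> V")
    case True
    then have "w \<noteq> u" using assms by blast
    then show ?thesis using eq \<open>z = z'\<close> insert_vertex_transpose by metis
  next
    case False
    then show ?thesis using g(1) g'(1) by (simp add: mem_degF_iff)
  qed
  with \<open>z = z'\<close> show "g = g' \<and> z = z'" by auto
qed

lemma insert_vertex_surj:
  assumes "u \<notin> V" "f \<in> degF (insert u V) d" "d u = 1"
  obtains g z where "g \<in> degF V d" "z \<in> insert u V" "f = insert_vertex u g z"
proof -
  let ?\<tau> = "Transposition.transpose"
  note f = assms(2)[unfolded mem_degF_iff]
  have "card {v\<in>insert u V. f v = u} = 1" using f assms(3) by simp
  then obtain z where z: "{v\<in>insert u V. f v = u} = {z}" by (rule card_1_singletonE)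
  then have z_in: "z \<in> insert u V" and fz: "f z = u" by auto
  have \<tau>: "bij_betw (?\<tau> z u) (insert u V - {z}) V" "bij_betw (?\<tau> z u) V (insert u V - {z})"
    using bij_betw_transpose_insert_Diff[OF assms(1) z_in] by blast+
  define g where "g w = (if w \<in> V then f (?\<tau> z u w) else undefined)" for w
  have "g \<in> degF V d"
    unfolding mem_degF_iff
  proof (intro conjI ballI allI impI)
    fix w assume w: "w \<in> V"
    then have "?\<tau> z u w \<in> insert u V - {z}" using bij_betw_apply[OF \<tau>(2)] by blast
    then show "g w \<in> V" using w f z by (auto simp: g_def)
  next
    fix i assume i: "i \<in> V"
    have "card {w\<in>V. g w = i} = card {w\<in>V. f (?\<tau> z u w) = i}"
      by (rule arg_cong[where f = card]) (auto simp: g_def)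
    also have "\<dots> = card {v\<in>insert u V - {z}. f v = i}"
      by (rule card_filter_comp_bij_betw[OF \<tau>(2)])
    also have "{v\<in>insert u V - {z}. f v = i} = {v\<in>insert u V. f v = i}"
      using fz i assms(1) by auto
    finally show "card {w\<in>V. g w = i} = d i" using f i by simp
  qed (simp add: g_def)
  moreover have "f = insert_vertex u g z"
  proof
    fix v
    show "f v = insert_vertex u g z v"
    proof (cases "v \<in> insert u V - {z}")
      case True
      then show ?thesis using bij_betw_apply[OF \<tau>(1) True] by (auto simp: insert_vertex_def g_def)
    next
      case False
      then show ?thesis using f fz assms(1) z_in by (auto simp: insert_vertex_def g_def)
    qed
  qed
  ultimately show ?thesis using z_in that by blast
qed

lemma bij_betw_insert_vertex:
  assumes "u \<notin> V" "d u = 1"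
  shows "bij_betw (\<lambda>(g, z). insert_vertex u g z) (degF V d \<times> insert u V) (degF (insert u V) d)"
  unfolding bij_betw_def
proof
  show "inj_on (\<lambda>(g, z). insert_vertex u g z) (degF V d \<times> insert u V)"
    using insert_vertex_inj[OF assms(1)] .
  show "(\<lambda>(g, z). insert_vertex u g z) ` (degF V d \<times> insert u V) = degF (insert u V) d"
  proof (intro equalityI subsetI)
    fix f assume "f \<in> degF (insert u V) d"
    then obtain g z where "g \<in> degF V d" "z \<in> insert u V" "f = insert_vertex u g z"
      using insert_vertex_surj[where d = d, OF assms(1) _ assms(2)] by metis
    then show "f \<in> (\<lambda>(g, z). insert_vertex u g z) ` (degF V d \<times> insert u V)" by force
  qed (use insert_vertex_in_degF[where d = d, OF assms(1) _ _ assms(2)] in auto)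
qed

lemma fgraph_eq_image: "fgraph V f = (\<lambda>v. (v, f v)) ` V"
  unfolding fgraph_def by auto

lemma card_fgraph: "card (fgraph V f) = card V"
  unfolding fgraph_eq_image by (rule card_image) (auto simp: inj_on_def)

lemma ext_step_fgraph:
  assumes "V \<subseteq> {1..n}" "V \<noteq> {1..n}" "u = Min ({1..n} - V)"
  shows "ext_step n (V, fgraph V g) =
    map_pmf (\<lambda>z. (insert u V, fgraph (insert u V) (insert_vertex u g z))) (pmf_of_set (insert u V))"
    (is "_ = map_pmf ?G _")
proof -
  have u: "u \<in> {1..n}" "u \<notin> V"
    using assms Min_in[of "{1..n} - V"] by auto
  have V: "finite V" using assms(1) finite_subset by blast
  let ?p = "1 / real (card V + 1)"
  have loop: "(insert u V, insert (u, u) (fgraph V g)) = ?G u"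
    using u by (auto simp: fgraph_def insert_vertex_def)
  have subdivide: "(insert u V, (fgraph V g - {(z, g z)}) \<union> {(z, u), (u, g z)}) = ?G z"
    if "z \<in> V" for z
    using u that by (auto simp: fgraph_def insert_vertex_def Transposition.transpose_def)
  have "ext_step n (V, fgraph V g) =
     bind_pmf (bernoulli_pmf ?p)
       (\<lambda>b. if b then return_pmf (insert u V, insert (u, u) (fgraph V g))
            else map_pmf (\<lambda>(x, y). (insert u V, (fgraph V g - {(x, y)}) \<union> {(x, u), (u, y)}))
                   (pmf_of_set (fgraph V g)))"
    unfolding ext_step_def prod.case if_not_P[OF assms(2)] Let_def assms(3)[symmetric] card_fgraph ..
  also have "\<dots> = bind_pmf (bernoulli_pmf ?p) (\<lambda>b. map_pmf ?G (if b then return_pmf u else pmf_of_set V))"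
  proof (rule bind_pmf_cong[OF refl])
    fix b assume b: "b \<in> set_pmf (bernoulli_pmf ?p)"
    show "(if b then return_pmf (insert u V, insert (u, u) (fgraph V g))
           else map_pmf (\<lambda>(x, y). (insert u V, (fgraph V g - {(x, y)}) \<union> {(x, u), (u, y)}))
                  (pmf_of_set (fgraph V g))) =
          map_pmf ?G (if b then return_pmf u else pmf_of_set V)"
    proof (cases b)
      case True
      then show ?thesis using loop by simp
    next
      case False
      with b have "V \<noteq> {}" by (auto simp: bernoulli_pmf_1)
      then have uniform_edge: "pmf_of_set (fgraph V g) = map_pmf (\<lambda>v. (v, g v)) (pmf_of_set V)"
        unfolding fgraph_eq_image using V by (subst map_pmf_of_set_inj) (auto simp: inj_on_def)
      have "map_pmf (\<lambda>(x, y). (insert u V, (fgraph V g - {(x, y)}) \<union> {(x, u), (u, y)}))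
                   (pmf_of_set (fgraph V g)) = map_pmf ?G (pmf_of_set V)"
        unfolding uniform_edge map_pmf_comp
        by (intro map_pmf_cong refl) (use subdivide V \<open>V \<noteq> {}\<close> in auto)
      with False show ?thesis by simp
    qed
  qed
  also have "\<dots> = map_pmf ?G (pmf_of_set (insert u V))"
    by (simp add: pmf_of_set_insert_eq_bernoulli_bind[OF V u(2)] map_bind_pmf)
  finally show ?thesis .
qed

lemma ext_step_random_fg:
  assumes "V \<subseteq> {1..n}" "V \<noteq> {1..n}" "u = Min ({1..n} - V)" "d u = 1" "degF V d \<noteq> {}"
  shows "bind_pmf (random_fg V d) (ext_step n) = random_fg (insert u V) d"
proof -
  let ?G = "\<lambda>f. (insert u V, fgraph (insert u V) f)" and ?ins = "\<lambda>(g, z). insert_vertex u g z"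
  have V: "finite V" using assms(1) finite_subset by blast
  have u: "u \<notin> V" using assms Min_in[of "{1..n} - V"] by auto
  have "bind_pmf (random_fg V d) (ext_step n) =
        bind_pmf (pmf_of_set (degF V d)) (\<lambda>g. map_pmf (\<lambda>z. ?G (insert_vertex u g z)) (pmf_of_set (insert u V)))"
    unfolding random_fg_def bind_map_pmf using ext_step_fgraph[OF assms(1-3)] by simp
  also have "\<dots> = map_pmf ?G (map_pmf ?ins (pmf_of_set (degF V d \<times> insert u V)))"
    using V finite_degF[OF V] assms(5)
    by (simp add: bind_pmf_map_pmf_eq_map_pmf_pair pmf_of_set_Times map_pmf_comp split_def)
  also have "map_pmf ?ins (pmf_of_set (degF V d \<times> insert u V)) = pmf_of_set (degF (insert u V) d)"
    using bij_betw_insert_vertex[where d = d, OF u assms(4)] V finite_degF[OF V] assms(5)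
    by (simp add: map_pmf_of_set_inj bij_betw_def)
  finally show ?thesis unfolding random_fg_def .
qed

lemma ext_step_random_fg_full: "bind_pmf (random_fg {1..n} d) (ext_step n) = random_fg {1..n} d"
  unfolding random_fg_def bind_map_pmf ext_step_def by (simp add: map_pmf_def)

lemma sum_degrees_Diff:
  assumes "(\<Sum>j\<in>{1..n}. d j) = n" "T \<subseteq> {1..n}" "\<forall>v\<in>T. d v = 1"
  shows "(\<Sum>j\<in>{1..n} - T. d j) = card ({1..n} - T)"
proof -
  have "n = (\<Sum>j\<in>{1..n} - T. d j) + (\<Sum>j\<in>T. d j)"
    using assms(1,2) sum.subset_diff[of T "{1..n}" d] by simp
  moreover have "(\<Sum>j\<in>T. d j) = card T" using assms(3) by simp
  moreover have "card ({1..n} - T) = n - card T"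
    using assms(2) by (simp add: card_Diff_subset finite_subset)
  ultimately show ?thesis by simp
qed

lemma funpow_ext_step_random_fg:
  assumes "(\<Sum>j\<in>{1..n}. d j) = n" "T \<subseteq> {1..n}" "\<forall>v\<in>T. d v = 1" "card T \<le> k"
  shows "((\<lambda>p. bind_pmf p (ext_step n)) ^^ k) (random_fg ({1..n} - T) d) = random_fg {1..n} d"
  using assms(2-4)
proof (induction k arbitrary: T)
  case 0
  then have "T = {}" using finite_subset by fastforce
  then show ?case by simp
next
  case (Suc k)
  let ?F = "\<lambda>p. bind_pmf p (ext_step n)"
  have unfold: "(?F ^^ Suc k) p = (?F ^^ k) (?F p)" for p
    by (simp only: funpow_Suc_right comp_apply)
  show ?case
  proof (cases "T = {}")
    case True
    then show ?thesis using Suc.IH[of "{}"] ext_step_random_fg_full[of n d] by (simp add: unfold)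
  next
    case False
    define u where "u = Min T"
    have u: "u \<in> T" using False Suc.prems(1) finite_subset u_def by (auto intro: Min_in)
    have Diff_Diff: "{1..n} - ({1..n} - T) = T" using Suc.prems(1) by auto
    have "(?F ^^ Suc k) (random_fg ({1..n} - T) d) = (?F ^^ k) (?F (random_fg ({1..n} - T) d))"
      by (rule unfold)
    also have "?F (random_fg ({1..n} - T) d) = random_fg (insert u ({1..n} - T)) d"
    proof (rule ext_step_random_fg)
      show "u = Min ({1..n} - ({1..n} - T))" unfolding Diff_Diff u_def ..
      show "degF ({1..n} - T) d \<noteq> {}"
        using degF_nonempty sum_degrees_Diff[OF assms(1) Suc.prems(1,2)] by simp
    qed (use u Suc.prems False in auto)
    also have "insert u ({1..n} - T) = {1..n} - (T - {u})" using u Suc.prems(1) by auto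
    also have "(?F ^^ k) (random_fg ({1..n} - (T - {u})) d) = random_fg {1..n} d"
      using Suc.prems u by (intro Suc.IH) (auto simp: finite_subset)
    finally show ?thesis .
  qed
qed

theorem lemma4p5:
  fixes n w :: nat and d :: "nat \<Rightarrow> nat" and S :: "nat set"
  assumes "(\<Sum>j\<in>{1..n}. d j) = n"
    and "w \<in> {1..n}"
    and "S \<subseteq> {1..n} - {w}"
    and "\<forall>v\<in>S. d v = 1"
    and "if hat_n n d \<ge> n then S = {} else card S = n - hat_n n d"
  shows "bind_pmf (random_fg ({1..n} - S) d) (n_extension n) = random_fg {1..n} d"
proof -
  have S: "S \<subseteq> {1..n}" using assms(3) by blast
  have "bind_pmf (random_fg ({1..n} - S) d) (n_extension n) =
        ((\<lambda>p. bind_pmf p (ext_step n)) ^^ n) (random_fg ({1..n} - S) d)"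
    unfolding n_extension_def by (rule funpow_bind_pmf_return)
  also have "\<dots> = random_fg {1..n} d"
    using card_mono[OF _ S] by (intro funpow_ext_step_random_fg[OF assms(1) S assms(4)]) simp
  finally show ?thesis .
qed

end
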